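(* Let $n\ge1$, $\gamma>1$, $V_0>0$, $\rho\in(0,1/n)$, $\theta>1$, $t\in[0,n]$, $\vartheta\in(0,1)$, original qualities $\alpha_1>\dots>\alpha_n>0$, and let $h:[0,1]\to[1,\infty)$ be differentiable, increasing and concave with $h(0)=1$, $h(1)=\bar h>1$. Assume $n\frac{\gamma-1}{\gamma}<1$, $\bar h^{1/\gamma}>\frac1{1-n\rho}$, and $\frac{h'(x)}{\gamma h(x)}>\frac{n\rho}{1-n\rho x}$ for all $x\in[0,1]$. Let $V^*=\frac{\gamma-1}{n-(n-1)\gamma}V_0$. Consider the simultaneous game in which each seller $i$ chooses $x_i\in[0,1]$ to maximize $$\pi_i^p(x_i,x_{-i})=\frac{\gamma-1}{\gamma}\Big(\frac{\alpha_i h(x_i)}{V^*}\Big)^{1/\gamma}\Big[1-\rho\sum_{j=1}^n x_j\Big]\Big(1-\vartheta-\theta\frac{t}{n}x_i\Big).$$ Define $\tau_1=\frac{h'(0)}{\gamma}-\rho$ and $\tau_2=\Big[1+\Big(\frac{h'(1)}{\gamma\bar h}-\frac{\rho}{1-n\rho}\Big)^{-1}\Big]^{-1}$. Then $\tau_1>\tau_2>0$, and the sellers' equilibrium adulteration decisions are symmetric, $x_i^*=x^*$ for all $i$, where: (1) if $\theta\frac{t}{n}\ge\tau_1(1-\vartheta)$, then $x^*=0$; (2) if $\theta\frac{t}{n}\le\tau_2(1-\vartheta)$, then $x^*=1$; (3) otherwise $x^*=\hat x$, where $\hat x\in(0,1)$ is determined by the equation $$\Big(\frac{h'(x)}{\gamma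 h(x)}-\frac{\rho}{1-n\rho x}\Big)\Big(1-\vartheta-\theta\frac{t}{n}x\Big)=\theta\frac{t}{n}.$$
   Context: $\pi_i^p$ is seller $i$'s expected profit on an e-commerce platform under preemptive economically motivated adulteration (adulteration chosen before the common quality uncertainty is realized), after substituting equilibrium prices. $x_i$ is the amount of adulterant, $h$ the quality improvement it produces, $\rho$ consumers' quality consciousness, $\gamma$ price sensitivity, $V_0$ the outside option's quality-price ratio, $\vartheta$ the platform's take rate, $t$ the number of randomly inspected sellers, and $\theta$ the penalty intensity; $\theta t/n$ is the "overall penalty risk". *)

theory Defs
  imports "HOL-Analysis.Analysis"
begin

definition Vstar :: "nat \<Rightarrow> real \<Rightarrow> real \<Rightarrow> real" where
  "Vstar n \<gamma> V0 = (\<gamma> - 1) / (real n - (real n - 1) * \<gamma>) * V0"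

definition profit ::
  "nat \<Rightarrow> real \<Rightarrow> real \<Rightarrow> real \<Rightarrow> real \<Rightarrow> real \<Rightarrow> real \<Rightarrow> (nat \<Rightarrow> real)
   \<Rightarrow> (real \<Rightarrow> real) \<Rightarrow> (nat \<Rightarrow> real) \<Rightarrow> nat \<Rightarrow> real" where
  "profit n \<gamma> V0 \<rho> \<phi> \<theta> t \<alpha> h x i =
     (\<gamma> - 1) / \<gamma> * (\<alpha> i * h (x i) / Vstar n \<gamma> V0) powr (1 / \<gamma>)
     * (1 - \<rho> * (\<Sum>j\<in>{1..n}. x j))
     * (1 - \<phi> - \<theta> * (t / real n) * x i)"

definition is_NE :: "nat \<Rightarrow> ((nat \<Rightarrow> real) \<Rightarrow> nat \<Rightarrow> real) \<Rightarrow> (nat \<Rightarrow> real) \<Rightarrow> bool" where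
  "is_NE n u x \<longleftrightarrow>
     (\<forall>i\<in>{1..n}. x i \<in> {0..1}) \<and>
     (\<forall>i\<in>{1..n}. \<forall>y\<in>{0..1}. u (x(i := y)) i \<le> u x i)"

definition tau1 :: "real \<Rightarrow> real \<Rightarrow> (real \<Rightarrow> real) \<Rightarrow> real" where
  "tau1 \<gamma> \<rho> h' = h' 0 / \<gamma> - \<rho>"

definition tau2 :: "nat \<Rightarrow> real \<Rightarrow> real \<Rightarrow> real \<Rightarrow> (real \<Rightarrow> real) \<Rightarrow> real" where
  "tau2 n \<gamma> \<rho> hbar h' =
     inverse (1 + inverse (h' 1 / (\<gamma> * hbar) - \<rho> / (1 - real n * \<rho>)))"

end

theory Submission
  imports Defs
begin

text \<open>
  Write \<open>w = 1 - \<vartheta>\<close> and \<open>k = \<theta> t / n\<close>. As a function of its own adulteration \<open>y\<close>, seller \<open>i\<close>'s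
  profit is a positive multiple of \<open>h y powr (1/\<gamma>) * (a - \<rho> y) * (w - k y)\<close>, where \<open>a\<close> depends on the
  rivals' adulteration only. Its logarithm is concave in \<open>y\<close>, strictly so through the demand
  factor, so a best response is unique and characterised by the one-sided first-order condition.
  The own marginal \<open>h'/(\<gamma> h) - k/(w - k y)\<close> is strictly decreasing while the demand term
  \<open>\<rho>/(1 - \<rho> \<Sum>x\<^sub>j)\<close> is common to all sellers, hence every equilibrium is symmetric. At a
  symmetric profile the first-order condition is that of the potential
  \<open>h y powr (1/\<gamma>) * (1 - n \<rho> y) powr (1/n) * (w - k y)\<close>, which is log-concave in the same way; so the equilibria
  are exactly the constant profiles at its unique maximiser on \<open>[0,1]\<close>. The thresholds
  \<open>\<tau>\<^sub>1\<close> and \<open>\<tau>\<^sub>2\<close> are where the log-derivative of the potential changes sign at \<open>0\<close> and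
  at \<open>1\<close>; in between, the maximiser is interior and the log-derivative vanishes there, which is
  the stated equation.
\<close>

section \<open>Derivatives at points of convex sets of reals\<close>

lemma segment_difference_quotient_tendsto:
  fixes f :: "real \<Rightarrow> real"
  assumes S: "convex S" and x: "x \<in> S" and y: "y \<in> S"
    and deriv: "(f has_real_derivative D) (at x within S)"
  shows "((\<lambda>s. (f (x + s * (y - x)) - f x) / s) \<longlongrightarrow> D * (y - x)) (at_right 0)"
proof -
  define p where "p s = x + s * (y - x)" for s :: real
  have "p ` {0..1} \<subseteq> S"
  proof
    fix z assume "z \<in> p ` {0..1}"
    then obtain s where s: "s \<in> {0..1}" and z: "z = (1 - s) *\<^sub>R x + s *\<^sub>R y"
      by (auto simp: p_def algebra_simps)
    show "z \<in> S" unfolding z using convexD_alt[OF S x y] s by simp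
  qed
  then have "(f has_real_derivative D) (at (p 0) within p ` {0..1})"
    using has_field_derivative_subset[OF deriv] by (simp add: p_def)
  moreover have "(p has_real_derivative (y - x)) (at 0 within {0..1})"
    unfolding p_def by (auto intro!: derivative_eq_intros)
  ultimately have "(f \<circ> p has_real_derivative D * (y - x)) (at 0 within {0..1})"
    by (rule DERIV_image_chain)
  then show ?thesis
    unfolding has_field_derivative_iff at_within_Icc_at_right[OF zero_less_one]
    by (simp add: p_def)
qed

lemma concave_on_le_tangent:
  fixes h :: "real \<Rightarrow> real"
  assumes concave: "concave_on S h" and x: "x \<in> S" and y: "y \<in> S"
    and deriv: "(h has_real_derivative D) (at x within S)"
  shows "h y \<le> h x + D * (y - x)"
proof -
  have chord: "h y - h x \<le> (h (x + s * (y - x)) - h x) / s" if "s \<in> {0<..<1}" for s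
  proof -
    have "(1 - s) * h x + s * h y \<le> h ((1 - s) *\<^sub>R x + s *\<^sub>R y)"
      using concave_onD[OF concave _ _ x y] that by simp
    then show ?thesis using that by (simp add: field_simps)
  qed
  have "eventually (\<lambda>s. h y - h x \<le> (h (x + s * (y - x)) - h x) / s) (at_right 0)"
    using eventually_at_right_real[OF zero_less_one] by (rule eventually_mono) (rule chord)
  then have "h y - h x \<le> D * (y - x)"
    using segment_difference_quotient_tendsto[OF concave_on_imp_convex[OF concave] x y deriv]
    by (intro tendsto_lowerbound) auto
  then show ?thesis by simp
qed

lemma maximum_within_convex_derivative_nonpos:
  fixes f :: "real \<Rightarrow> real"
  assumes S: "convex S" and x: "x \<in> S" and y: "y \<in> S"
    and deriv: "(f has_real_derivative D) (at x within S)"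
    and max: "\<forall>z\<in>S. f z \<le> f x"
  shows "D * (y - x) \<le> 0"
proof -
  have quotient: "(f (x + s * (y - x)) - f x) / s \<le> 0" if "s \<in> {0<..<1}" for s
  proof -
    have "x + s * (y - x) = (1 - s) *\<^sub>R x + s *\<^sub>R y" by (simp add: algebra_simps)
    then have "x + s * (y - x) \<in> S" using convexD_alt[OF S x y] that by simp
    then show ?thesis using max that by (simp add: divide_nonpos_pos)
  qed
  have "eventually (\<lambda>s. (f (x + s * (y - x)) - f x) / s \<le> 0) (at_right 0)"
    using eventually_at_right_real[OF zero_less_one] by (rule eventually_mono) (rule quotient)
  then show ?thesis
    using segment_difference_quotient_tendsto[OF S x y deriv]
    by (intro tendsto_upperbound) auto
qed

lemma Icc_variational_inequality_iff:
  fixes a b x D :: real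
  assumes "x \<in> {a..b}"
  shows "(\<forall>y\<in>{a..b}. D * (y - x) \<le> 0) \<longleftrightarrow> (a < x \<longrightarrow> 0 \<le> D) \<and> (x < b \<longrightarrow> D \<le> 0)"
proof
  assume vi: "\<forall>y\<in>{a..b}. D * (y - x) \<le> 0"
  have "D * (a - x) \<le> 0" "D * (b - x) \<le> 0" using vi assms by auto
  then show "(a < x \<longrightarrow> 0 \<le> D) \<and> (x < b \<longrightarrow> D \<le> 0)"
    by (auto simp: mult_le_0_iff)
next
  assume "(a < x \<longrightarrow> 0 \<le> D) \<and> (x < b \<longrightarrow> D \<le> 0)"
  then show "\<forall>y\<in>{a..b}. D * (y - x) \<le> 0"
    using assms by (cases "D = 0") (auto simp: mult_le_0_iff)
qed

section \<open>A log-concave profit kernel\<close>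

text \<open>
  A seller's payoff in its own adulteration \<open>y\<close> has this form with \<open>b = \<rho>\<close>, \<open>e = 1\<close>, and the
  symmetric potential has \<open>a = 1\<close>, \<open>b = n\<rho>\<close>, \<open>e = 1/n\<close>.
\<close>

definition profit_kernel ::
  "(real \<Rightarrow> real) \<Rightarrow> real \<Rightarrow> real \<Rightarrow> real \<Rightarrow> real \<Rightarrow> real \<Rightarrow> real \<Rightarrow> real \<Rightarrow> real" where
  "profit_kernel h \<gamma> a b e c k y = h y powr (1 / \<gamma>) * (a - b * y) powr e * (c - k * y)"

definition profit_kernel_logderiv ::
  "(real \<Rightarrow> real) \<Rightarrow> (real \<Rightarrow> real) \<Rightarrow> real \<Rightarrow> real \<Rightarrow> real \<Rightarrow> real \<Rightarrow> real \<Rightarrow> real \<Rightarrow> real \<Rightarrow> real"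
  where
  "profit_kernel_logderiv h h' \<gamma> a b e c k y = h' y / (\<gamma> * h y) - e * b / (a - b * y) - k / (c - k * y)"

lemma profit_kernel_pos_iff:
  assumes "0 < h y" and "0 < a - b * y"
  shows "0 < profit_kernel h \<gamma> a b e c k y \<longleftrightarrow> 0 < c - k * y"
proof -
  have "0 < h y powr (1 / \<gamma>) * (a - b * y) powr e" using assms by simp
  then show ?thesis unfolding profit_kernel_def by (metis mult_less_cancel_left_pos mult_zero_right)
qed

lemma profit_kernel_has_derivative:
  assumes deriv: "(h has_real_derivative h' x) (at x within S)"
    and h: "0 < h x" and a: "0 < a - b * x" and c: "0 < c - k * x" and \<gamma>: "0 < \<gamma>"
  shows "(profit_kernel h \<gamma> a b e c k has_real_derivative
      profit_kernel h \<gamma> a b e c k x * profit_kernel_logderiv h h' \<gamma> a b e c k x) (at x within S)"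
proof -
  have "((\<lambda>y. h y powr (1 / \<gamma>) * (a - b * y) powr e * (c - k * y)) has_real_derivative
      (h' x * (1 / \<gamma>) * h x powr (1 / \<gamma> - 1) * (a - b * x) powr e
       + h x powr (1 / \<gamma>) * (- b * e * (a - b * x) powr (e - 1))) * (c - k * x)
      + h x powr (1 / \<gamma>) * (a - b * x) powr e * (- k)) (at x within S)"
    (is "(_ has_real_derivative ?D) _")
    using h a by (auto intro!: derivative_eq_intros deriv)
  moreover have "?D = profit_kernel h \<gamma> a b e c k x * profit_kernel_logderiv h h' \<gamma> a b e c k x"
  proof -
    have h_powr: "h x powr (1 / \<gamma> - 1) = h x powr (1 / \<gamma>) / h x"
      and a_powr: "(a - b * x) powr (e - 1) = (a - b * x) powr e / (a - b * x)"
      using h a by (simp_all add: powr_diff)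
    have "(h' x * (1 / \<gamma>) * (P / H) * Q + P * (- b * e * (Q / A))) * E + P * Q * (- k)
        = P * Q * E * (h' x / (\<gamma> * H) - e * b / A - k / E)"
      if "0 < H" "0 < A" "0 < E" for P Q H A E :: real
      using that \<gamma> by (simp add: field_simps)
    then show ?thesis
      unfolding h_powr a_powr profit_kernel_def profit_kernel_logderiv_def using h a c by simp
  qed
  ultimately show ?thesis by (simp add: profit_kernel_def[abs_def])
qed

context
  fixes S :: "real set" and h h' :: "real \<Rightarrow> real" and \<gamma> a b e c k :: real
  assumes S: "convex S"
    and h_deriv: "\<forall>y\<in>S. (h has_real_derivative h' y) (at y within S)"
    and h_concave: "concave_on S h" and h_pos: "\<forall>y\<in>S. 0 < h y"
    and \<gamma>: "0 < \<gamma>" and b: "b \<noteq> 0" and e: "0 < e" and a: "\<forall>y\<in>S. 0 < a - b * y"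
begin

lemma profit_kernel_strict_max:
  assumes x: "x \<in> S" and c: "0 < c - k * x"
    and vi: "\<forall>y\<in>S. profit_kernel_logderiv h h' \<gamma> a b e c k x * (y - x) \<le> 0"
    and y: "y \<in> S" and yx: "y \<noteq> x"
  shows "profit_kernel h \<gamma> a b e c k y < profit_kernel h \<gamma> a b e c k x"
proof -
  let ?K = "profit_kernel h \<gamma> a b e c k"
  have hx: "0 < h x" and hy: "0 < h y" and ax: "0 < a - b * x" and ay: "0 < a - b * y"
    using h_pos a x y by auto
  have Kx: "0 < ?K x" using profit_kernel_pos_iff[of h x a b \<gamma> e c k, OF hx ax] c by simp
  show ?thesis
  proof (cases "0 < c - k * y")
    case False
    then show ?thesis using profit_kernel_pos_iff[of h y a b \<gamma> e c k, OF hy ay] Kx by linarith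
  next
    case cy: True
    have ln_K: "ln (?K z) = ln (h z) / \<gamma> + e * ln (a - b * z) + ln (c - k * z)"
      if "0 < h z" "0 < a - b * z" "0 < c - k * z" for z
      using that by (simp add: profit_kernel_def ln_mult ln_powr)
    have "ln (h y) - ln (h x) \<le> (h y - h x) / h x" using hy hx by (rule ln_diff_le)
    also have "\<dots> \<le> h' x * (y - x) / h x"
      using concave_on_le_tangent[OF h_concave x y h_deriv[rule_format, OF x]] hx
      by (simp add: divide_right_mono)
    finally have "(ln (h y) - ln (h x)) / \<gamma> \<le> (h' x * (y - x) / h x) / \<gamma>"
      using \<gamma> by (intro divide_right_mono) auto
    then have quality: "(ln (h y) - ln (h x)) / \<gamma> \<le> h' x * (y - x) / (\<gamma> * h x)"
      by (simp add: mult.commute)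
    have "ln (a - b * y) - ln (a - b * x) < ((a - b * y) - (a - b * x)) / (a - b * x)"
      using ay ax yx b by (intro ln_diff_less) auto
    then have "e * (ln (a - b * y) - ln (a - b * x)) < e * (((a - b * y) - (a - b * x)) / (a - b * x))"
      using e by (rule mult_strict_left_mono)
    then have demand: "e * (ln (a - b * y) - ln (a - b * x)) < - e * b * (y - x) / (a - b * x)"
      by (simp add: algebra_simps)
    have "ln (c - k * y) - ln (c - k * x) \<le> ((c - k * y) - (c - k * x)) / (c - k * x)"
      using cy c by (intro ln_diff_le)
    then have margin: "ln (c - k * y) - ln (c - k * x) \<le> - k * (y - x) / (c - k * x)"
      by (simp add: algebra_simps)
    have "ln (?K y) - ln (?K x)
        < h' x * (y - x) / (\<gamma> * h x) - e * b * (y - x) / (a - b * x) - k * (y - x) / (c - k * x)"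
      using ln_K[OF hy ay cy] ln_K[OF hx ax c] quality demand margin
      by (simp add: diff_divide_distrib algebra_simps)
    also have "\<dots> = profit_kernel_logderiv h h' \<gamma> a b e c k x * (y - x)"
      by (simp add: profit_kernel_logderiv_def algebra_simps)
    also have "\<dots> \<le> 0" using vi y by blast
    finally show ?thesis
      using Kx profit_kernel_pos_iff[of h y a b \<gamma> e c k, OF hy ay] cy by simp
  qed
qed

lemma profit_kernel_argmax_iff:
  assumes x: "x \<in> S" and z: "z \<in> S" "0 < c - k * z"
  shows "(\<forall>y\<in>S. profit_kernel h \<gamma> a b e c k y \<le> profit_kernel h \<gamma> a b e c k x)
    \<longleftrightarrow> 0 < c - k * x \<and> (\<forall>y\<in>S. profit_kernel_logderiv h h' \<gamma> a b e c k x * (y - x) \<le> 0)"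
    (is "(\<forall>y\<in>S. ?K y \<le> ?K x) \<longleftrightarrow> _ \<and> (\<forall>y\<in>S. ?L * (y - x) \<le> 0)")
proof
  assume max: "\<forall>y\<in>S. ?K y \<le> ?K x"
  have hx: "0 < h x" and ax: "0 < a - b * x" using h_pos a x by auto
  have "0 < ?K z" using profit_kernel_pos_iff z h_pos a by auto
  then have Kx: "0 < ?K x" using max z by fastforce
  then have c: "0 < c - k * x" using profit_kernel_pos_iff[of h x a b \<gamma> e c k, OF hx ax] by simp
  have "?K x * ?L * (y - x) \<le> 0" if "y \<in> S" for y
    using maximum_within_convex_derivative_nonpos[OF S x that
        profit_kernel_has_derivative[where h' = h', OF h_deriv[rule_format, OF x] hx ax c \<gamma>] max] by simp
  then have "?L * (y - x) \<le> 0" if "y \<in> S" for y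
    using Kx that by (simp add: mult.assoc mult_le_0_iff)
  with c show "0 < c - k * x \<and> (\<forall>y\<in>S. ?L * (y - x) \<le> 0)" by blast
next
  assume "0 < c - k * x \<and> (\<forall>y\<in>S. ?L * (y - x) \<le> 0)"
  then show "\<forall>y\<in>S. ?K y \<le> ?K x"
    using profit_kernel_strict_max[OF x] by (metis order.order_iff_strict)
qed

end

section \<open>The adulteration game\<close>

definition unique_equilibrium :: "nat \<Rightarrow> ((nat \<Rightarrow> real) \<Rightarrow> nat \<Rightarrow> real) \<Rightarrow> real \<Rightarrow> bool" where
  "unique_equilibrium n u z \<longleftrightarrow>
    is_NE n u (\<lambda>_. z) \<and> (\<forall>x. is_NE n u x \<longrightarrow> (\<forall>i\<in>{1..n}. x i = z))"

text \<open>
  The parameters \<open>w\<close> and \<open>k\<close> stand for \<open>1 - \<vartheta>\<close> and the overall penalty risk \<open>\<theta> t / n\<close>.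
  The seller-specific positive factor \<open>(\<gamma> - 1)/\<gamma> * (\<alpha>\<^sub>i / Vstar) powr (1/\<gamma>)\<close> of the profit is left out
  of \<open>payoff\<close>; it does not affect best responses.
\<close>

locale preemptive_game =
  fixes n :: nat and \<gamma> \<rho> w k :: real and h h' :: "real \<Rightarrow> real"
  assumes n: "1 \<le> n" and \<gamma>: "0 < \<gamma>" and \<rho>: "0 < \<rho>" and n\<rho>: "real n * \<rho> < 1"
    and w: "0 < w" and k: "0 \<le> k"
    and h_deriv: "\<forall>x\<in>{0..1}. (h has_real_derivative h' x) (at x within {0..1})"
    and h_concave: "concave_on {0..1} h"
    and h_pos: "\<forall>x\<in>{0..1}. 0 < h x" and h0: "h 0 = 1"
    and quality_gain: "\<forall>x\<in>{0..1}. real n * \<rho> / (1 - real n * \<rho> * x) < h' x / (\<gamma> * h x)"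
begin

definition payoff :: "(nat \<Rightarrow> real) \<Rightarrow> nat \<Rightarrow> real" where
  "payoff x i = h (x i) powr (1 / \<gamma>) * (1 - \<rho> * (\<Sum>j\<in>{1..n}. x j)) * (w - k * x i)"

definition rivals_total :: "(nat \<Rightarrow> real) \<Rightarrow> nat \<Rightarrow> real" where
  "rivals_total x i = (\<Sum>j\<in>{1..n} - {i}. x j)"

definition own_margin :: "real \<Rightarrow> real" where
  "own_margin y = h' y / (\<gamma> * h y) - k / (w - k * y)"

text \<open>At a symmetric profile every seller's first-order condition is the one of \<open>potential\<close>.\<close>

definition potential :: "real \<Rightarrow> real" where
  "potential = profit_kernel h \<gamma> 1 (real n * \<rho>) (1 / real n) w k"

definition potential_logderiv :: "real \<Rightarrow> real" where
  "potential_logderiv y = own_margin y - \<rho> / (1 - real n * \<rho> * y)"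

lemma demand_pos: "s \<le> real n \<Longrightarrow> 0 < 1 - \<rho> * s"
proof -
  assume "s \<le> real n"
  then have "\<rho> * s \<le> real n * \<rho>" using \<rho> by (simp add: mult.commute mult_left_mono)
  then show ?thesis using n\<rho> by linarith
qed

lemma potential_demand_pos: "\<forall>y\<in>{0..1}. 0 < 1 - real n * \<rho> * y"
proof
  fix y :: real assume "y \<in> {0..1}"
  then have "real n * y \<le> real n" by (simp add: mult_left_le)
  then have "0 < 1 - \<rho> * (real n * y)" by (rule demand_pos)
  then show "0 < 1 - real n * \<rho> * y" by (simp add: mult_ac)
qed

lemma h'_pos: "x \<in> {0..1} \<Longrightarrow> 0 < h' x"
proof -
  assume x: "x \<in> {0..1}"
  have "0 < real n * \<rho> / (1 - real n * \<rho> * x)"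
    using potential_demand_pos x n \<rho> by simp
  also have "\<dots> < h' x / (\<gamma> * h x)" using quality_gain x by blast
  finally have "0 < h' x / (\<gamma> * h x)" .
  moreover have "0 < \<gamma> * h x" using h_pos x \<gamma> by simp
  ultimately show ?thesis by (simp add: zero_less_divide_iff)
qed

lemma quality_ratio_strict_antimono:
  assumes x: "x \<in> {0..1}" and y: "y \<in> {0..1}" and xy: "x < y"
  shows "h' y / (\<gamma> * h y) < h' x / (\<gamma> * h x)"
proof -
  have "h y \<le> h x + h' x * (y - x)" "h x \<le> h y + h' y * (x - y)"
    using concave_on_le_tangent[OF h_concave] h_deriv x y by auto
  then have "h' y * (y - x) \<le> h y - h x" "h y - h x \<le> h' x * (y - x)"
    by (simp_all add: algebra_simps)
  moreover have "0 < h' y * (y - x)" using h'_pos[OF y] xy by simp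
  ultimately have "h' y * (y - x) \<le> h' x * (y - x)" and h_less: "h x < h y" by linarith+
  then have h'_le: "h' y \<le> h' x" using xy by (simp add: mult_le_cancel_right)
  have "h' y / (\<gamma> * h y) \<le> h' x / (\<gamma> * h y)"
    using h'_le h_pos y \<gamma> by (intro divide_right_mono) (auto simp: less_imp_le)
  also have "\<dots> < h' x / (\<gamma> * h x)"
    using h_less h_pos x y \<gamma> h'_pos[OF x] by (intro divide_strict_left_mono) auto
  finally show ?thesis .
qed

lemma own_margin_strict_antimono:
  assumes "x \<in> {0..1}" "y \<in> {0..1}" "x < y" and wy: "0 < w - k * y"
  shows "own_margin y < own_margin x"
proof -
  have "k * x \<le> k * y" using assms k by (simp add: mult_left_mono)
  then have "k / (w - k * x) \<le> k / (w - k * y)"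
    using wy k by (intro divide_left_mono) auto
  then show ?thesis
    using quality_ratio_strict_antimono[OF assms(1-3)] by (simp add: own_margin_def)
qed

lemma rivals_total_bounds:
  assumes x: "\<forall>j\<in>{1..n}. x j \<in> {0..1}" and i: "i \<in> {1..n}"
  shows "0 \<le> rivals_total x i" and "rivals_total x i \<le> real n - 1"
proof -
  show "0 \<le> rivals_total x i" unfolding rivals_total_def using x by (intro sum_nonneg) auto
  have "rivals_total x i \<le> real (card ({1..n} - {i})) * 1"
    unfolding rivals_total_def using x by (intro sum_bounded_above) auto
  then show "rivals_total x i \<le> real n - 1" using i by (simp add: of_nat_diff)
qed

lemma total_eq_rivals_total: "i \<in> {1..n} \<Longrightarrow> (\<Sum>j\<in>{1..n}. x j) = x i + rivals_total x i"
  unfolding rivals_total_def by (simp add: sum.remove)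

lemma payoff_deviation:
  assumes x: "\<forall>j\<in>{1..n}. x j \<in> {0..1}" and i: "i \<in> {1..n}" and y: "y \<in> {0..1}"
  shows "payoff (x(i := y)) i = profit_kernel h \<gamma> (1 - \<rho> * rivals_total x i) \<rho> 1 w k y"
proof -
  have "rivals_total (x(i := y)) i = rivals_total x i" by (simp add: rivals_total_def)
  then have total: "(\<Sum>j\<in>{1..n}. (x(i := y)) j) = y + rivals_total x i"
    using total_eq_rivals_total[OF i, of "x(i := y)"] by simp
  have "0 < 1 - \<rho> * (y + rivals_total x i)"
    using rivals_total_bounds[OF x i] y by (intro demand_pos) auto
  then show ?thesis
    unfolding payoff_def total by (simp add: profit_kernel_def powr_one algebra_simps)
qed

lemma best_response_iff:
  assumes x: "\<forall>j\<in>{1..n}. x j \<in> {0..1}" and i: "i \<in> {1..n}"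
  defines "T \<equiv> \<Sum>j\<in>{1..n}. x j"
  shows "(\<forall>y\<in>{0..1}. payoff (x(i := y)) i \<le> payoff x i) \<longleftrightarrow>
      0 < w - k * x i \<and> (0 < x i \<longrightarrow> \<rho> / (1 - \<rho> * T) \<le> own_margin (x i))
        \<and> (x i < 1 \<longrightarrow> own_margin (x i) \<le> \<rho> / (1 - \<rho> * T))"
proof -
  define a where "a = 1 - \<rho> * rivals_total x i"
  have xi: "x i \<in> {0..1}" using x i by blast
  have a_pos: "\<forall>y\<in>{0..1}. 0 < a - \<rho> * y"
    using rivals_total_bounds[OF x i] demand_pos[of "y + rivals_total x i" for y]
    by (auto simp: a_def algebra_simps)
  have "payoff x i = profit_kernel h \<gamma> a \<rho> 1 w k (x i)"
    using payoff_deviation[OF x i xi] by (simp add: a_def)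
  then have "(\<forall>y\<in>{0..1}. payoff (x(i := y)) i \<le> payoff x i) \<longleftrightarrow>
      (\<forall>y\<in>{0..1}. profit_kernel h \<gamma> a \<rho> 1 w k y \<le> profit_kernel h \<gamma> a \<rho> 1 w k (x i))"
    using payoff_deviation[OF x i] xi by (simp add: a_def)
  also have "\<dots> \<longleftrightarrow> 0 < w - k * x i \<and>
      (\<forall>y\<in>{0..1}. profit_kernel_logderiv h h' \<gamma> a \<rho> 1 w k (x i) * (y - x i) \<le> 0)"
    using profit_kernel_argmax_iff[where c = w and k = k and z = 0,
        OF convex_real_interval(5) h_deriv h_concave h_pos \<gamma> _ _ a_pos xi] \<rho> w by simp
  also have "profit_kernel_logderiv h h' \<gamma> a \<rho> 1 w k (x i) = own_margin (x i) - \<rho> / (1 - \<rho> * T)"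
    using total_eq_rivals_total[OF i, of x]
    by (simp add: profit_kernel_logderiv_def own_margin_def a_def T_def algebra_simps)
  finally show ?thesis
    unfolding Icc_variational_inequality_iff[OF xi] by (simp only: diff_ge_0_iff_ge diff_le_0_iff_le)
qed

lemma is_NE_imp_symmetric:
  assumes NE: "is_NE n payoff x" and i: "i \<in> {1..n}" and j: "j \<in> {1..n}"
  shows "x i = x j"
proof -
  have x: "\<forall>j\<in>{1..n}. x j \<in> {0..1}" and br: "\<forall>i\<in>{1..n}. \<forall>y\<in>{0..1}. payoff (x(i := y)) i \<le> payoff x i"
    using NE by (auto simp: is_NE_def)
  have "\<not> x p < x q" if p: "p \<in> {1..n}" and q: "q \<in> {1..n}" for p q
  proof
    assume less: "x p < x q"
    let ?R = "\<rho> / (1 - \<rho> * (\<Sum>j\<in>{1..n}. x j))"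
    have xp: "x p \<in> {0..1}" and xq: "x q \<in> {0..1}" using x p q by auto
    have "own_margin (x p) \<le> ?R"
      using best_response_iff[OF x p] br p less xq by auto
    moreover have "?R \<le> own_margin (x q)" and "0 < w - k * x q"
      using best_response_iff[OF x q] br q less xp by auto
    ultimately show False using own_margin_strict_antimono[OF xp xq less] by linarith
  qed
  then show ?thesis using i j by (meson linorder_neqE)
qed

lemma potential_argmax_iff:
  assumes z: "z \<in> {0..1}"
  shows "(\<forall>y\<in>{0..1}. potential y \<le> potential z) \<longleftrightarrow>
    0 < w - k * z \<and> (0 < z \<longrightarrow> 0 \<le> potential_logderiv z) \<and> (z < 1 \<longrightarrow> potential_logderiv z \<le> 0)"
proof -
  have "profit_kernel_logderiv h h' \<gamma> 1 (real n * \<rho>) (1 / real n) w k z = potential_logderiv z"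
    using n by (simp add: profit_kernel_logderiv_def potential_logderiv_def own_margin_def)
  then show ?thesis
    using profit_kernel_argmax_iff[where c = w and k = k and z = 0,
        OF convex_real_interval(5) h_deriv h_concave h_pos \<gamma> _ _ potential_demand_pos z]
      Icc_variational_inequality_iff[OF z] n \<rho> w
    by (simp add: potential_def)
qed

lemma potential_strict_argmax:
  assumes "z \<in> {0..1}" "\<forall>y\<in>{0..1}. potential y \<le> potential z" "y \<in> {0..1}" "y \<noteq> z"
  shows "potential y < potential z"
  using profit_kernel_argmax_iff[where c = w and k = k and z = 0,
      OF convex_real_interval(5) h_deriv h_concave h_pos \<gamma> _ _ potential_demand_pos]
    profit_kernel_strict_max[where c = w and k = k,
      OF convex_real_interval(5) h_deriv h_concave h_pos \<gamma> _ _ potential_demand_pos]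
    assms n \<rho> w
  by (simp add: potential_def)

lemma best_response_at_symmetric_iff:
  assumes x: "\<forall>j\<in>{1..n}. x j = z" and z: "z \<in> {0..1}" and i: "i \<in> {1..n}"
  shows "(\<forall>y\<in>{0..1}. payoff (x(i := y)) i \<le> payoff x i) \<longleftrightarrow>
    (\<forall>y\<in>{0..1}. potential y \<le> potential z)"
proof -
  have "(\<Sum>j\<in>{1..n}. x j) = real n * z" using x by simp
  then show ?thesis
    using best_response_iff[of x i] potential_argmax_iff[OF z] x z i
    by (simp add: potential_logderiv_def mult_ac)
qed

lemma is_NE_iff_potential_argmax:
  "is_NE n payoff x \<longleftrightarrow>
    (\<exists>z\<in>{0..1}. (\<forall>y\<in>{0..1}. potential y \<le> potential z) \<and> (\<forall>i\<in>{1..n}. x i = z))"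
proof
  assume NE: "is_NE n payoff x"
  have one: "1 \<in> {1..n}" using n by simp
  have sym: "\<forall>i\<in>{1..n}. x i = x 1" using is_NE_imp_symmetric[OF NE _ one] by blast
  moreover have z: "x 1 \<in> {0..1}" using NE one by (simp add: is_NE_def)
  moreover have "\<forall>y\<in>{0..1}. potential y \<le> potential (x 1)"
    using NE best_response_at_symmetric_iff[OF sym z one] one by (simp add: is_NE_def)
  ultimately show "\<exists>z\<in>{0..1}. (\<forall>y\<in>{0..1}. potential y \<le> potential z) \<and> (\<forall>i\<in>{1..n}. x i = z)"
    by blast
next
  assume "\<exists>z\<in>{0..1}. (\<forall>y\<in>{0..1}. potential y \<le> potential z) \<and> (\<forall>i\<in>{1..n}. x i = z)"
  then obtain z where z: "z \<in> {0..1}" and max: "\<forall>y\<in>{0..1}. potential y \<le> potential z"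
    and sym: "\<forall>i\<in>{1..n}. x i = z" by blast
  then show "is_NE n payoff x"
    using best_response_at_symmetric_iff[OF sym z] by (simp add: is_NE_def)
qed

lemma potential_argmax_exists: "\<exists>z\<in>{0..1}. \<forall>y\<in>{0..1}. potential y \<le> potential z"
proof -
  have "continuous_on {0..1} h"
    using h_deriv by (meson DERIV_continuous continuous_on_eq_continuous_within)
  then have "continuous_on {0..1} potential"
    unfolding potential_def profit_kernel_def[abs_def] using h_pos potential_demand_pos
    by (intro continuous_intros) auto
  then show ?thesis using continuous_attains_sup[OF compact_Icc, of 0 1 potential] by simp
qed

lemma unique_equilibrium_at_potential_argmax:
  assumes z: "z \<in> {0..1}" and max: "\<forall>y\<in>{0..1}. potential y \<le> potential z"
  shows "unique_equilibrium n payoff z"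
proof -
  have unique: "z' = z" if "z' \<in> {0..1}" "\<forall>y\<in>{0..1}. potential y \<le> potential z'" for z'
  proof (rule ccontr)
    assume "z' \<noteq> z"
    then have "potential z' < potential z" by (rule potential_strict_argmax[OF z max that(1)])
    with that(2) z show False by fastforce
  qed
  have "is_NE n payoff (\<lambda>_. z)" unfolding is_NE_iff_potential_argmax using z max by blast
  moreover have "\<forall>i\<in>{1..n}. x i = z" if NE: "is_NE n payoff x" for x
  proof -
    obtain z' where "z' \<in> {0..1}" "\<forall>y\<in>{0..1}. potential y \<le> potential z'"
      and "\<forall>i\<in>{1..n}. x i = z'"
      using NE unfolding is_NE_iff_potential_argmax by blast
    then show ?thesis using unique by simp
  qed
  ultimately show ?thesis unfolding unique_equilibrium_def by blast
qed

definition margin_at_one :: real where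
  "margin_at_one = h' 1 / (\<gamma> * h 1) - \<rho> / (1 - real n * \<rho>)"

lemma potential_logderiv_at_0: "potential_logderiv 0 = tau1 \<gamma> \<rho> h' - k / w"
  by (simp add: potential_logderiv_def own_margin_def tau1_def h0)

lemma potential_logderiv_at_1: "potential_logderiv 1 = margin_at_one - k / (w - k)"
  by (simp add: potential_logderiv_def own_margin_def margin_at_one_def)

lemma margin_at_one_pos: "0 < margin_at_one"
proof -
  have "\<rho> / (1 - real n * \<rho>) \<le> real n * \<rho> / (1 - real n * \<rho>)"
    using n \<rho> n\<rho> by (intro divide_right_mono) auto
  also have "\<dots> < h' 1 / (\<gamma> * h 1)" using quality_gain[rule_format, of 1] by simp
  finally show ?thesis by (simp add: margin_at_one_def)
qed

lemma tau2_eq: "tau2 n \<gamma> \<rho> (h 1) h' = margin_at_one / (1 + margin_at_one)"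
  unfolding tau2_def margin_at_one_def[symmetric] using margin_at_one_pos by (simp add: field_simps)

lemma tau2_pos_less_tau1: "0 < tau2 n \<gamma> \<rho> (h 1) h' \<and> tau2 n \<gamma> \<rho> (h 1) h' < tau1 \<gamma> \<rho> h'"
proof -
  have "tau2 n \<gamma> \<rho> (h 1) h' < margin_at_one"
    using margin_at_one_pos by (simp add: tau2_eq divide_less_eq)
  also have "margin_at_one < tau1 \<gamma> \<rho> h'"
  proof -
    have "h' 1 / (\<gamma> * h 1) < h' 0 / \<gamma>"
      using quality_ratio_strict_antimono[of 0 1] h0 by simp
    moreover have "\<rho> \<le> \<rho> / (1 - real n * \<rho>)"
      using \<rho> n\<rho> n by (simp add: le_divide_eq)
    ultimately show ?thesis by (simp add: margin_at_one_def tau1_def)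
  qed
  finally show ?thesis using margin_at_one_pos by (simp add: tau2_eq)
qed

lemma potential_argmax_at_0:
  assumes "tau1 \<gamma> \<rho> h' * w \<le> k"
  shows "\<forall>y\<in>{0..1}. potential y \<le> potential 0"
  using potential_argmax_iff[of 0] potential_logderiv_at_0 assms w by (simp add: le_divide_eq)

lemma potential_argmax_at_1:
  assumes k_le: "k \<le> tau2 n \<gamma> \<rho> (h 1) h' * w"
  shows "\<forall>y\<in>{0..1}. potential y \<le> potential 1"
proof -
  have "tau2 n \<gamma> \<rho> (h 1) h' * w < w"
    using margin_at_one_pos w by (simp add: tau2_eq divide_less_eq)
  then have wk: "0 < w - k" using k_le by linarith
  have "k \<le> margin_at_one * w / (1 + margin_at_one)" using k_le by (simp add: tau2_eq)
  then have "k * (1 + margin_at_one) \<le> margin_at_one * w"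
    using margin_at_one_pos by (simp add: le_divide_eq)
  then have "k / (w - k) \<le> margin_at_one" using wk by (simp add: divide_le_eq algebra_simps)
  then show ?thesis using potential_argmax_iff[of 1] potential_logderiv_at_1 wk by simp
qed

lemma potential_argmax_interior:
  assumes lower: "tau2 n \<gamma> \<rho> (h 1) h' * w < k" and upper: "k < tau1 \<gamma> \<rho> h' * w"
  shows "\<exists>z. 0 < z \<and> z < 1
    \<and> (h' z / (\<gamma> * h z) - \<rho> / (1 - real n * \<rho> * z)) * (w - k * z) = k
    \<and> (\<forall>y\<in>{0..1}. potential y \<le> potential z)"
proof -
  obtain z where z: "z \<in> {0..1}" and max: "\<forall>y\<in>{0..1}. potential y \<le> potential z"
    using potential_argmax_exists by blast
  then have wk: "0 < w - k * z"
    and foc: "(0 < z \<longrightarrow> 0 \<le> potential_logderiv z) \<and> (z < 1 \<longrightarrow> potential_logderiv z \<le> 0)"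
    using potential_argmax_iff by blast+
  have "z \<noteq> 0"
  proof
    assume "z = 0"
    then have "tau1 \<gamma> \<rho> h' \<le> k / w" using foc potential_logderiv_at_0 by simp
    then show False using upper w by (simp add: le_divide_eq)
  qed
  moreover have "z \<noteq> 1"
  proof
    assume "z = 1"
    then have "k / (w - k) \<le> margin_at_one" and "0 < w - k"
      using foc wk potential_logderiv_at_1 by auto
    then have "k * (1 + margin_at_one) \<le> margin_at_one * w" by (simp add: divide_le_eq algebra_simps)
    then have "k \<le> tau2 n \<gamma> \<rho> (h 1) h' * w"
      using margin_at_one_pos by (simp add: tau2_eq le_divide_eq)
    then show False using lower by simp
  qed
  ultimately have interior: "0 < z" "z < 1" using z by auto
  then have "potential_logderiv z = 0" using foc by simp
  then have "(h' z / (\<gamma> * h z) - \<rho> / (1 - real n * \<rho> * z)) * (w - k * z) = k"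
    using wk by (simp add: potential_logderiv_def own_margin_def field_simps)
  then show ?thesis using interior max by blast
qed

theorem unique_equilibrium_cases:
  "(tau1 \<gamma> \<rho> h' * w \<le> k \<longrightarrow> unique_equilibrium n payoff 0) \<and>
   (k \<le> tau2 n \<gamma> \<rho> (h 1) h' * w \<longrightarrow> unique_equilibrium n payoff 1) \<and>
   (tau2 n \<gamma> \<rho> (h 1) h' * w < k \<and> k < tau1 \<gamma> \<rho> h' * w \<longrightarrow>
     (\<exists>z. 0 < z \<and> z < 1 \<and> (h' z / (\<gamma> * h z) - \<rho> / (1 - real n * \<rho> * z)) * (w - k * z) = k
        \<and> unique_equilibrium n payoff z))"
  using potential_argmax_at_0 potential_argmax_at_1 potential_argmax_interior
    unique_equilibrium_at_potential_argmax
  by (metis atLeastAtMost_iff greaterThanLessThan_iff le_less zero_le_one)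

end

lemma Vstar_pos:
  assumes "1 < \<gamma>" and "0 < V0" and "real n * ((\<gamma> - 1) / \<gamma>) < 1"
  shows "0 < Vstar n \<gamma> V0"
proof -
  have "real n * (\<gamma> - 1) < \<gamma>" using assms by (simp add: field_simps)
  then have "0 < real n - (real n - 1) * \<gamma>" by (simp add: algebra_simps)
  then show ?thesis using assms by (simp add: Vstar_def)
qed

lemma is_NE_cong_scaled:
  assumes C: "\<forall>i\<in>{1..n}. 0 < C i"
    and eq: "\<And>x i. \<forall>j\<in>{1..n}. x j \<in> {0..1} \<Longrightarrow> i \<in> {1..n} \<Longrightarrow> u x i = C i * v x i"
  shows "is_NE n u x \<longleftrightarrow> is_NE n v x"
proof -
  have "u (x(i := y)) i \<le> u x i \<longleftrightarrow> v (x(i := y)) i \<le> v x i"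
    if x: "\<forall>j\<in>{1..n}. x j \<in> {0..1}" and i: "i \<in> {1..n}" and y: "y \<in> {0..1}" for i y
  proof -
    have "\<forall>j\<in>{1..n}. (x(i := y)) j \<in> {0..1}" using x y by simp
    then show ?thesis using eq[OF x i] eq[of "x(i := y)" i] i C by simp
  qed
  then show ?thesis unfolding is_NE_def by auto
qed

lemma (in preemptive_game) profit_eq_scaled_payoff:
  assumes "w = 1 - \<phi>" and "k = \<theta> * (t / real n)"
    and "0 \<le> \<alpha> i" and "0 < Vstar n \<gamma> V0" and "x i \<in> {0..1}"
  shows "profit n \<gamma> V0 \<rho> \<phi> \<theta> t \<alpha> h x i
    = (\<gamma> - 1) / \<gamma> * (\<alpha> i / Vstar n \<gamma> V0) powr (1 / \<gamma>) * payoff x i"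
proof -
  have "(\<alpha> i * h (x i) / Vstar n \<gamma> V0) powr (1 / \<gamma>)
      = (\<alpha> i / Vstar n \<gamma> V0) powr (1 / \<gamma>) * h (x i) powr (1 / \<gamma>)"
    using assms h_pos by (simp add: powr_mult[symmetric] less_imp_le)
  then show ?thesis unfolding profit_def payoff_def using assms by (simp add: mult_ac)
qed

theorem theorem2:
  fixes n :: nat and \<gamma> V0 \<rho> \<theta> t \<phi> hbar :: real
    and \<alpha> :: "nat \<Rightarrow> real" and h h' :: "real \<Rightarrow> real"
  assumes n: "n \<ge> 1"
    and \<gamma>: "\<gamma> > 1" and V0: "V0 > 0"
    and \<rho>: "0 < \<rho>" "\<rho> < 1 / real n"
    and \<theta>: "\<theta> > 1"
    and t: "0 \<le> t" "t \<le> real n"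
    and \<phi>: "0 < \<phi>" "\<phi> < 1"
    and \<alpha>_dec: "\<forall>i j. 1 \<le> i \<longrightarrow> i < j \<longrightarrow> j \<le> n \<longrightarrow> \<alpha> j < \<alpha> i"
    and \<alpha>_pos: "\<alpha> n > 0"
    and h_deriv: "\<forall>x\<in>{0..1}. (h has_real_derivative h' x) (at x within {0..1})"
    and h_mono: "mono_on {0..1} h"
    and h_concave: "concave_on {0..1} h"
    and h_range: "\<forall>x\<in>{0..1}. h x \<ge> 1"
    and h0: "h 0 = 1" and h1: "h 1 = hbar" and hbar: "hbar > 1"
    and A1: "real n * ((\<gamma> - 1) / \<gamma>) < 1"
    and A2: "hbar powr (1 / \<gamma>) > 1 / (1 - real n * \<rho>)"
    and A3: "\<forall>x\<in>{0..1}. h' x / (\<gamma> * h x) > real n * \<rho> / (1 - real n * \<rho> * x)"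
  defines "u \<equiv> profit n \<gamma> V0 \<rho> \<phi> \<theta> t \<alpha> h"
    and "\<tau>\<^sub>1 \<equiv> tau1 \<gamma> \<rho> h'"
    and "\<tau>\<^sub>2 \<equiv> tau2 n \<gamma> \<rho> hbar h'"
  shows "\<tau>\<^sub>1 > \<tau>\<^sub>2 \<and> \<tau>\<^sub>2 > 0 \<and>
    (\<theta> * (t / real n) \<ge> \<tau>\<^sub>1 * (1 - \<phi>) \<longrightarrow>
       is_NE n u (\<lambda>_. 0) \<and> (\<forall>x. is_NE n u x \<longrightarrow> (\<forall>i\<in>{1..n}. x i = 0))) \<and>
    (\<theta> * (t / real n) \<le> \<tau>\<^sub>2 * (1 - \<phi>) \<longrightarrow>
       is_NE n u (\<lambda>_. 1) \<and> (\<forall>x. is_NE n u x \<longrightarrow> (\<forall>i\<in>{1..n}. x i = 1))) \<and>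
    (\<tau>\<^sub>2 * (1 - \<phi>) < \<theta> * (t / real n) \<and> \<theta> * (t / real n) < \<tau>\<^sub>1 * (1 - \<phi>) \<longrightarrow>
       (\<exists>xh. 0 < xh \<and> xh < 1 \<and>
          (h' xh / (\<gamma> * h xh) - \<rho> / (1 - real n * \<rho> * xh)) * (1 - \<phi> - \<theta> * (t / real n) * xh)
            = \<theta> * (t / real n) \<and>
          is_NE n u (\<lambda>_. xh) \<and> (\<forall>x. is_NE n u x \<longrightarrow> (\<forall>i\<in>{1..n}. x i = xh))))"
proof -
  define w k where "w = 1 - \<phi>" and "k = \<theta> * (t / real n)"
  have "preemptive_game n \<gamma> \<rho> w k h h'"
  proof
    show "real n * \<rho> < 1" using \<rho>(2) n by (simp add: less_divide_eq mult.commute)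
    show "0 < w" using \<phi> by (simp add: w_def)
    show "0 \<le> k" using \<theta> t n by (simp add: k_def)
    show "\<forall>x\<in>{0..1}. 0 < h x" using h_range by (auto intro: less_le_trans[OF zero_less_one])
  qed (use n \<gamma> \<rho> h_deriv h_concave h0 A3 in auto)
  then interpret game: preemptive_game n \<gamma> \<rho> w k h h' .
  have \<alpha>: "\<forall>i\<in>{1..n}. 0 < \<alpha> i"
    using \<alpha>_dec \<alpha>_pos by (metis atLeastAtMost_iff le_less order.strict_trans)
  have NE: "is_NE n u x \<longleftrightarrow> is_NE n game.payoff x" for x
    unfolding u_def using \<alpha> Vstar_pos[OF \<gamma> V0 A1] \<gamma>
    by (intro is_NE_cong_scaled[where C = "\<lambda>i. (\<gamma> - 1) / \<gamma> * (\<alpha> i / Vstar n \<gamma> V0) powr (1 / \<gamma>)"])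
      (auto simp: game.profit_eq_scaled_payoff[OF w_def k_def] less_imp_le)
  have "unique_equilibrium n u z \<longleftrightarrow> unique_equilibrium n game.payoff z" for z
    unfolding unique_equilibrium_def NE ..
  then show ?thesis
    using game.tau2_pos_less_tau1 game.unique_equilibrium_cases
    unfolding unique_equilibrium_def[symmetric] \<tau>\<^sub>1_def \<tau>\<^sub>2_def w_def k_def h1 by simp
qed

end
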